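(* Let $\lambda>0$ and let $\mathbf r_\lambda(t)$, $t\ge0$, be the uniformly rotating planar trajectory generated by a minimizer of $f+\lambda g$ (see context), regarded as a motion in $\mathbb R^3$ lying in the plane $z=0$, with velocities $\mathbf v(t)=\dot{\mathbf r}_\lambda(t)$. Let $\mathbf L=\mathbf L(\mathbf r_\lambda(t),\mathbf v(t))$ and $T=T(\mathbf v(t))$ (both constant in $t$), and assume $\mathbf L\ne0$, $T>0$. Then for every $t\ge0$ the state $(\mathbf r_\lambda(t),\mathbf v(t))$ minimizes $g(\mathbf r)$ over all $(\mathbf r,\mathbf v)\in\Omega$ with $\mathbf L(\mathbf r,\mathbf v)=\mathbf L$ and $T(\mathbf v)=T$.
   Context: Fix $N\ge2$, masses $m_i>0$, $\gamma>0$. Planar configuration space $\mathfrak R=\{\mathbf r\in(\mathbb R^2)^N:\ \mathbf r_i\neq\mathbf r_j \text{ for } i\neq j\}$; $f(\mathbf r)=\sum_{i<j}\frac{\gamma m_im_j}{|\mathbf r_j-\mathbf r_i|}$, $g(\mathbf r)=\sum_i m_i|\mathbf r_i|^2$. For a minimizer $\mathbf r_\lambda=(\mathbf r_{1\lambda},\dots,\mathbf r_{N\lambda})$ of $f+\lambda g$ on $\mathfrak R$, with $\mathbf r_{i\lambda}=|\mathbf r_{i\lambda}|(\cos\varphi_{i\lambda},\sin\varphi_{i\lambda})$ and $\omega=\sqrt{2\lambda}$, set $\mathbf r_{i\lambda}(t)=|\mathbf r_{i\lambda}|(\cos(\varphi_{i\lambda}+\omega t),\sin(\varphi_{i\lambda}+\omega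 t))$. Three-dimensional phase space $\Omega=\mathfrak R_3\times(\mathbb R^3)^N$, $\mathfrak R_3=\{\mathbf r\in(\mathbb R^3)^N:\mathbf r_i\ne\mathbf r_j,\ i\ne j\}$; $\mathbf L(\mathbf r,\mathbf v)=\sum_im_i\mathbf r_i\times\mathbf v_i$, $T(\mathbf v)=\frac12\sum_im_i|\mathbf v_i|^2$, $g(\mathbf r)=\sum_im_i|\mathbf r_i|^2$. *)

theory Defs
  imports "HOL-Analysis.Analysis" "HOL-Analysis.Cross3"
begin

text \<open>Particles are indexed by i < N; configurations are functions nat => vector,
  only the values at i < N matter.\<close>

definition config :: "nat \<Rightarrow> (nat \<Rightarrow> 'a) set" where
  "config N = {r. \<forall>i<N. \<forall>j<N. i \<noteq> j \<longrightarrow> r i \<noteq> r j}"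

definition fpot :: "nat \<Rightarrow> real \<Rightarrow> (nat \<Rightarrow> real) \<Rightarrow> (nat \<Rightarrow> 'a::real_normed_vector) \<Rightarrow> real" where
  "fpot N \<gamma> m r = (\<Sum>j<N. \<Sum>i<j. \<gamma> * m i * m j / norm (r j - r i))"

definition gmom :: "nat \<Rightarrow> (nat \<Rightarrow> real) \<Rightarrow> (nat \<Rightarrow> 'a::real_normed_vector) \<Rightarrow> real" where
  "gmom N m r = (\<Sum>i<N. m i * (norm (r i))\<^sup>2)"

definition angmom :: "nat \<Rightarrow> (nat \<Rightarrow> real) \<Rightarrow> (nat \<Rightarrow> real^3) \<Rightarrow> (nat \<Rightarrow> real^3) \<Rightarrow> real^3" where
  "angmom N m r v = (\<Sum>i<N. m i *\<^sub>R cross3 (r i) (v i))"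

definition kin :: "nat \<Rightarrow> (nat \<Rightarrow> real) \<Rightarrow> (nat \<Rightarrow> real^3) \<Rightarrow> real" where
  "kin N m v = (1/2) * (\<Sum>i<N. m i * (norm (v i))\<^sup>2)"

definition phase :: "nat \<Rightarrow> ((nat \<Rightarrow> real^3) \<times> (nat \<Rightarrow> real^3)) set" where
  "phase N = config N \<times> UNIV"

definition is_minimizer :: "nat \<Rightarrow> real \<Rightarrow> (nat \<Rightarrow> real) \<Rightarrow> real \<Rightarrow> (nat \<Rightarrow> real^2) \<Rightarrow> bool" where
  "is_minimizer N \<gamma> m lam r0 \<longleftrightarrow> r0 \<in> config N \<and>
     (\<forall>r::nat \<Rightarrow> real^2. r \<in> config N \<longrightarrow> fpot N \<gamma> m r0 + lam * gmom N m r0 \<le> fpot N \<gamma> m r + lam * gmom N m r)"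

definition rot_traj :: "(nat \<Rightarrow> real^2) \<Rightarrow> (nat \<Rightarrow> real) \<Rightarrow> real \<Rightarrow> real \<Rightarrow> nat \<Rightarrow> real^3" where
  "rot_traj r0 \<phi> \<omega> t i = vector [norm (r0 i) * cos (\<phi> i + \<omega> * t), norm (r0 i) * sin (\<phi> i + \<omega> * t), 0]"

end

theory Submission
  imports Defs
begin

text \<open>For any state and any \<omega> > 0, the bound |r \<times> v| \<le> |r| |v| together with
  2 \<omega> |r| |v| \<le> \<omega>^2 |r|^2 + |v|^2, weighted by the masses and summed, gives
  2 \<omega> |L| \<le> \<omega>^2 g + 2 T. The rigidly rotating state with angular velocity \<omega> attains
  equality: each particle has |v| = \<omega> |r| with v orthogonal to r, and all the
  individual angular momenta point along the rotation axis.\<close>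

lemma norm_cross3_le: "norm (cross3 x y) \<le> norm x * norm y"
  using norm_cross_dot[of x y]
  by (metis abs_le_square_iff abs_norm_cancel abs_of_nonneg le_add_same_cancel1
      mult_nonneg_nonneg norm_ge_zero zero_le_power2)

lemma weighted_amgm:
  fixes w x y :: real
  assumes "w > 0"
  shows "2 * w * (x * y) \<le> w\<^sup>2 * x\<^sup>2 + y\<^sup>2"
proof -
  have "0 \<le> (w * x - y)\<^sup>2" by simp
  also have "\<dots> = w\<^sup>2 * x\<^sup>2 + y\<^sup>2 - 2 * w * (x * y)"
    by (simp add: power2_diff power_mult_distrib algebra_simps)
  finally show ?thesis by simp
qed

lemma polar_eq_rotate:
  fixes a b \<phi> \<psi> \<theta> :: real
  assumes "a * cos \<phi> = b * cos \<psi>" and "a * sin \<phi> = b * sin \<psi>"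
  shows "a * cos (\<phi> + \<theta>) = b * cos (\<psi> + \<theta>) \<and> a * sin (\<phi> + \<theta>) = b * sin (\<psi> + \<theta>)"
proof -
  have "a * cos (\<phi> + \<theta>) = (a * cos \<phi>) * cos \<theta> - (a * sin \<phi>) * sin \<theta>"
    and "a * sin (\<phi> + \<theta>) = (a * sin \<phi>) * cos \<theta> + (a * cos \<phi>) * sin \<theta>"
    and "b * cos (\<psi> + \<theta>) = (b * cos \<psi>) * cos \<theta> - (b * sin \<psi>) * sin \<theta>"
    and "b * sin (\<psi> + \<theta>) = (b * sin \<psi>) * cos \<theta> + (b * cos \<psi>) * sin \<theta>"
    by (simp_all add: cos_add sin_add algebra_simps)
  with assms show ?thesis by simp
qed

lemma at_within_atLeast_nontrivial:
  fixes a t :: real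
  assumes "a \<le> t"
  shows "at t within {a..} \<noteq> bot"
  using assms islimpt_subset[of t "{a..t+1}" "{a..}"] by (simp add: trivial_limit_within)

lemma norm_vector_3_sq: "(norm (vector [x, y, z] :: real^3))\<^sup>2 = x\<^sup>2 + y\<^sup>2 + z\<^sup>2"
  unfolding power2_norm_eq_inner by (simp add: inner_vec_def sum_3 vector_3 power2_eq_square)

lemma vector_3_plane_decomp:
  "vector [x, y, 0] = x *\<^sub>R (axis 1 1 :: real^3) + y *\<^sub>R axis 2 1"
  by (simp add: vec_eq_iff forall_3 vector_3 axis_def)

lemma norm_angmom_bound:
  assumes "\<forall>i<N. 0 \<le> m i" and "\<omega> > 0"
  shows "2 * \<omega> * norm (angmom N m r w) \<le> \<omega>\<^sup>2 * gmom N m r + 2 * kin N m w"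
proof -
  have "norm (angmom N m r w) \<le> (\<Sum>i<N. m i * norm (cross3 (r i) (w i)))"
    unfolding angmom_def using assms(1) by (auto intro!: order_trans[OF norm_sum] sum_mono)
  then have "2 * \<omega> * norm (angmom N m r w) \<le> 2 * \<omega> * (\<Sum>i<N. m i * norm (cross3 (r i) (w i)))"
    using \<open>\<omega> > 0\<close> by simp
  also have "\<dots> = (\<Sum>i<N. m i * (2 * \<omega> * norm (cross3 (r i) (w i))))"
    by (simp add: sum_distrib_left algebra_simps)
  also have "\<dots> \<le> (\<Sum>i<N. m i * (\<omega>\<^sup>2 * (norm (r i))\<^sup>2 + (norm (w i))\<^sup>2))"
  proof (intro sum_mono mult_left_mono)
    fix i assume "i \<in> {..<N}"
    then show "0 \<le> m i" using assms(1) by simp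
    have "2 * \<omega> * norm (cross3 (r i) (w i)) \<le> 2 * \<omega> * (norm (r i) * norm (w i))"
      using \<open>\<omega> > 0\<close> norm_cross3_le[of "r i" "w i"] by simp
    also have "\<dots> \<le> \<omega>\<^sup>2 * (norm (r i))\<^sup>2 + (norm (w i))\<^sup>2"
      using weighted_amgm[OF \<open>\<omega> > 0\<close>] .
    finally show "2 * \<omega> * norm (cross3 (r i) (w i)) \<le> \<dots>" .
  qed
  also have "\<dots> = \<omega>\<^sup>2 * gmom N m r + 2 * kin N m w"
    by (simp add: gmom_def kin_def sum.distrib sum_distrib_left algebra_simps)
  finally show ?thesis .
qed

lemma gmom_nonneg: "\<forall>i<N. 0 \<le> m i \<Longrightarrow> 0 \<le> gmom N m r"
  by (auto simp: gmom_def intro!: sum_nonneg)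

lemma gmom_le_if_angmom_bound_attained:
  assumes "\<forall>i<N. 0 \<le> m i" and "\<omega> > 0"
    and attained: "2 * \<omega> * norm (angmom N m R V) = \<omega>\<^sup>2 * gmom N m R + 2 * kin N m V"
    and "angmom N m r w = angmom N m R V" and "kin N m w = kin N m V"
  shows "gmom N m R \<le> gmom N m r"
proof -
  have "\<omega>\<^sup>2 * gmom N m R \<le> \<omega>\<^sup>2 * gmom N m r"
    using norm_angmom_bound[OF assms(1,2), of r w] attained assms(4,5) by simp
  then show ?thesis using \<open>\<omega> > 0\<close> by simp
qed

definition rot_vel :: "(nat \<Rightarrow> real^2) \<Rightarrow> (nat \<Rightarrow> real) \<Rightarrow> real \<Rightarrow> real \<Rightarrow> nat \<Rightarrow> real^3" where
  "rot_vel r0 \<phi> \<omega> t i =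
     vector [- (norm (r0 i) * \<omega> * sin (\<phi> i + \<omega> * t)), norm (r0 i) * \<omega> * cos (\<phi> i + \<omega> * t), 0]"

lemma has_vector_derivative_rot_traj:
  "((\<lambda>s. rot_traj r0 \<phi> \<omega> s i) has_vector_derivative rot_vel r0 \<phi> \<omega> t i) (at t within S)"
  unfolding rot_traj_def rot_vel_def vector_3_plane_decomp
  by (auto intro!: derivative_eq_intros
      simp: has_real_derivative_iff_has_vector_derivative[symmetric] algebra_simps)

lemma norm_rot_traj: "norm (rot_traj r0 \<phi> \<omega> t i) = norm (r0 i)"
proof -
  have "(norm (rot_traj r0 \<phi> \<omega> t i))\<^sup>2 = (norm (r0 i))\<^sup>2"
    unfolding rot_traj_def norm_vector_3_sq
    by (simp add: power_mult_distrib flip: distrib_left)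
  then show ?thesis by simp
qed

lemma norm_rot_vel: "norm (rot_vel r0 \<phi> \<omega> t i) = \<bar>\<omega>\<bar> * norm (r0 i)"
proof -
  have "(norm (rot_vel r0 \<phi> \<omega> t i))\<^sup>2 = (\<bar>\<omega>\<bar> * norm (r0 i))\<^sup>2"
    unfolding rot_vel_def norm_vector_3_sq
    by (simp add: power_mult_distrib algebra_simps flip: distrib_left)
  then show ?thesis by (simp add: power2_eq_iff_nonneg)
qed

lemma cross3_rot_traj_rot_vel:
  "cross3 (rot_traj r0 \<phi> \<omega> t i) (rot_vel r0 \<phi> \<omega> t i) = (\<omega> * (norm (r0 i))\<^sup>2) *\<^sub>R axis 3 1"
proof -
  have "(norm (r0 i) * cos (\<phi> i + \<omega> * t)) * (norm (r0 i) * \<omega> * cos (\<phi> i + \<omega> * t))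
      + (norm (r0 i) * sin (\<phi> i + \<omega> * t)) * (norm (r0 i) * \<omega> * sin (\<phi> i + \<omega> * t))
      = \<omega> * (norm (r0 i))\<^sup>2"
    by (simp add: power2_eq_square algebra_simps flip: distrib_left)
  then show ?thesis
    unfolding rot_traj_def rot_vel_def
    by (simp add: cross3_def vec_eq_iff forall_3 vector_3 axis_def algebra_simps)
qed

lemma gmom_rot_traj: "gmom N m (rot_traj r0 \<phi> \<omega> t) = gmom N m r0"
  by (simp add: gmom_def norm_rot_traj)

lemma kin_rot_vel: "kin N m (rot_vel r0 \<phi> \<omega> t) = \<omega>\<^sup>2 / 2 * gmom N m r0"
  by (simp add: kin_def gmom_def norm_rot_vel power_mult_distrib sum_distrib_left algebra_simps)

lemma angmom_rot:
  "angmom N m (rot_traj r0 \<phi> \<omega> t) (rot_vel r0 \<phi> \<omega> t) = (\<omega> * gmom N m r0) *\<^sub>R axis 3 1"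
  by (simp add: angmom_def gmom_def cross3_rot_traj_rot_vel scaleR_sum_left sum_distrib_left
      algebra_simps)

lemma angmom_bound_attained_rot:
  assumes "\<forall>i<N. 0 \<le> m i" and "\<omega> \<ge> 0"
  shows "2 * \<omega> * norm (angmom N m (rot_traj r0 \<phi> \<omega> t) (rot_vel r0 \<phi> \<omega> t))
    = \<omega>\<^sup>2 * gmom N m (rot_traj r0 \<phi> \<omega> t) + 2 * kin N m (rot_vel r0 \<phi> \<omega> t)"
  using assms gmom_nonneg[OF assms(1), of r0]
  by (simp add: angmom_rot gmom_rot_traj kin_rot_vel abs_mult power2_eq_square)

lemma rot_traj_in_config:
  assumes "r0 \<in> config N"
    and polar: "\<forall>i<N. r0 i = norm (r0 i) *\<^sub>R vector [cos (\<phi> i), sin (\<phi> i)]"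
  shows "rot_traj r0 \<phi> \<omega> t \<in> config N"
  unfolding config_def
proof (intro CollectI allI impI)
  have coords: "r0 k $ 1 = norm (r0 k) * cos (\<phi> k)" "r0 k $ 2 = norm (r0 k) * sin (\<phi> k)"
    if "k < N" for k
    using arg_cong[where f="\<lambda>x. x $ 1", OF polar[rule_format, OF that]]
      arg_cong[where f="\<lambda>x. x $ 2", OF polar[rule_format, OF that]]
    by simp_all
  fix i j assume "i < N" "j < N" "i \<noteq> j"
  show "rot_traj r0 \<phi> \<omega> t i \<noteq> rot_traj r0 \<phi> \<omega> t j"
  proof
    assume "rot_traj r0 \<phi> \<omega> t i = rot_traj r0 \<phi> \<omega> t j"
    then have "norm (r0 i) * cos (\<phi> i) = norm (r0 j) * cos (\<phi> j)
        \<and> norm (r0 i) * sin (\<phi> i) = norm (r0 j) * sin (\<phi> j)"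
      using polar_eq_rotate[of "norm (r0 i)" "\<phi> i + \<omega> * t" "norm (r0 j)" "\<phi> j + \<omega> * t" "- (\<omega> * t)"]
      unfolding rot_traj_def by (simp add: vec_eq_iff forall_3 vector_3)
    then have "r0 i = r0 j"
      using coords \<open>i < N\<close> \<open>j < N\<close> by (simp add: vec_eq_iff forall_2)
    with assms(1) \<open>i < N\<close> \<open>j < N\<close> \<open>i \<noteq> j\<close> show False unfolding config_def by blast
  qed
qed

theorem theorem10p2:
  fixes N :: nat and m :: "nat \<Rightarrow> real" and \<gamma> lam :: real
    and rlam :: "nat \<Rightarrow> real^2" and \<phi> :: "nat \<Rightarrow> real"
    and v :: "real \<Rightarrow> nat \<Rightarrow> real^3"
  assumes "N \<ge> 2" and "\<forall>i<N. m i > 0" and "\<gamma> > 0" and "lam > 0"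
    and "is_minimizer N \<gamma> m lam rlam"
    and "\<forall>i<N. rlam i = norm (rlam i) *\<^sub>R vector [cos (\<phi> i), sin (\<phi> i)]"
    and "\<forall>t\<ge>0. \<forall>i<N. ((\<lambda>s. rot_traj rlam \<phi> (sqrt (2 * lam)) s i) has_vector_derivative v t i)
            (at t within {0..})"
    and "angmom N m (rot_traj rlam \<phi> (sqrt (2 * lam)) 0) (v 0) \<noteq> 0"
    and "kin N m (v 0) > 0"
  shows "\<forall>t\<ge>0. (rot_traj rlam \<phi> (sqrt (2 * lam)) t, v t) \<in> phase N \<and>
     (\<forall>r w. (r, w) \<in> phase N \<and>
        angmom N m r w = angmom N m (rot_traj rlam \<phi> (sqrt (2 * lam)) t) (v t) \<and>
        kin N m w = kin N m (v t)
        \<longrightarrow> gmom N m (rot_traj rlam \<phi> (sqrt (2 * lam)) t) \<le> gmom N m r)"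
proof (intro allI impI)
  fix t :: real assume "t \<ge> 0"
  let ?\<omega> = "sqrt (2 * lam)"
  let ?R = "rot_traj rlam \<phi> ?\<omega> t" and ?V = "rot_vel rlam \<phi> ?\<omega> t"
  have "?\<omega> > 0" using \<open>lam > 0\<close> by simp
  have masses: "\<forall>i<N. 0 \<le> m i" using assms(2) by (simp add: less_imp_le)
  have "v t i = ?V i" if "i < N" for i
    using vector_derivative_unique_within[OF at_within_atLeast_nontrivial[OF \<open>t \<ge> 0\<close>]
        assms(7)[rule_format, OF \<open>t \<ge> 0\<close> that] has_vector_derivative_rot_traj] .
  then have L_eq: "angmom N m ?R (v t) = angmom N m ?R ?V" and T_eq: "kin N m (v t) = kin N m ?V"
    unfolding angmom_def kin_def by (auto intro!: sum.cong)
  have attained: "2 * ?\<omega> * norm (angmom N m ?R ?V) = ?\<omega>\<^sup>2 * gmom N m ?R + 2 * kin N m ?V"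
    using angmom_bound_attained_rot[OF masses] \<open>lam > 0\<close> by simp
  \<comment> \<open>Minimality of rlam enters only through rlam \<in> config N: every rigid rotation
    at angular velocity ?\<omega> minimizes g for its own L and T.\<close>
  have "?R \<in> config N"
    using assms(5,6) rot_traj_in_config unfolding is_minimizer_def by blast
  then show "(?R, v t) \<in> phase N \<and>
     (\<forall>r w. (r, w) \<in> phase N \<and> angmom N m r w = angmom N m ?R (v t) \<and> kin N m w = kin N m (v t)
        \<longrightarrow> gmom N m ?R \<le> gmom N m r)"
    using gmom_le_if_angmom_bound_attained[OF masses \<open>?\<omega> > 0\<close> attained] L_eq T_eq
    by (auto simp: phase_def)
qed

end
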